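(* Let $1<p<q<\infty$ and $\alpha>0$. Then $$L^{q),\alpha}(\Omega)=\bigl(L^{p),\alpha}(\Omega),\,L^{q}(\Omega)\bigr)_{1,\infty;-\frac{\alpha}{q}},$$ that is, the two spaces coincide as sets and their norms are equivalent. Equivalently, there is a constant $c\ge 1$ such that for every measurable $f$ on $\Omega$, $$c^{-1}\|f\|_{q),\alpha}\le \sup_{0<t<1}t^{-1}(1-\log t)^{-\alpha/q}K\bigl(f,t;L^{p),\alpha},L^q\bigr)\le c\,\|f\|_{q),\alpha}.$$
   Context: $\Omega\subset\mathbb R^n$ is a bounded open set with Lebesgue measure $|\Omega|=1$. For a measurable $f:\Omega\to\mathbb R$, $f_*$ denotes the decreasing rearrangement of $|f|$ on $(0,1)$, i.e. the generalized inverse of the distribution function $D_f(\lambda)=|\{x\in\Omega:|f(x)|>\lambda\}|$. $\log$ is the natural logarithm. Grand Lebesgue space: for $1<p<\infty$ and $\alpha>0$, $L^{p),\alpha}(\Omega)$ is the set of measurable $f$ with $$\|f\|_{p),\alpha}=\sup_{0<t<1}(1-\log t)^{-\alpha/p}\Bigl(\int_t^1 f_*(\sigma)^p\,d\sigma\Bigr)^{1/p}<\infty .$$ K-functional: for Banach spaces $X_0,X_1$ continuously embedded in a common Hausdorff topological vector space, $g\in X_0+X_1$ and $t>0$, $$K(g,t;X_0,X_1)=\inf_{g=g_0+g_1,\ g_i\in X_i}\bigl(\|g_0\|_{X_0}+t\|g_1\|_{X_1}\bigr).$$ Interpolation spaces (with the K-functional only used on $(0,1)$): for $0\le\theta\le1$,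 $1\le r\le\infty$, $\gamma\in\mathbb R$, $(X_0,X_1)_{\theta,r;\gamma}$ is the set of $g\in X_0+X_1$ with $$\|g\|_{\theta,r;\gamma}=\Bigl(\int_0^1\bigl[t^{-\theta}(1-\log t)^{\gamma}K(g,t;X_0,X_1)\bigr]^r\frac{dt}{t}\Bigr)^{1/r}<\infty,$$ with the usual modification $\|g\|_{\theta,\infty;\gamma}=\sup_{0<t<1}t^{-\theta}(1-\log t)^{\gamma}K(g,t;X_0,X_1)$ when $r=\infty$. *)

theory Defs
  imports "HOL-Analysis.Analysis"
begin

definition distr_fun :: "'a::euclidean_space set \<Rightarrow> ('a \<Rightarrow> real) \<Rightarrow> real \<Rightarrow> real" where
  "distr_fun \<Omega> f lam = measure lebesgue {x \<in> \<Omega>. \<bar>f x\<bar> > lam}"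

definition drearr :: "'a::euclidean_space set \<Rightarrow> ('a \<Rightarrow> real) \<Rightarrow> real \<Rightarrow> real" where
  "drearr \<Omega> f s = Inf {lam. 0 \<le> lam \<and> distr_fun \<Omega> f lam \<le> s}"

text \<open>Grand Lebesgue norm (value \<infinity> allowed).  For 0 < t < 1 the rearrangement is
  bounded and monotone on [t,1], so the inner integral is a genuine finite integral.\<close>
definition grand_norm :: "'a::euclidean_space set \<Rightarrow> real \<Rightarrow> real \<Rightarrow> ('a \<Rightarrow> real) \<Rightarrow> ennreal" where
  "grand_norm \<Omega> p \<alpha> f =
     (SUP t\<in>{0<..<1}. ennreal ((1 - ln t) powr (- \<alpha> / p) *
        (LBINT s=t..1. (drearr \<Omega> f s) powr p) powr (1 / p)))"

definition Lq_norm :: "'a::euclidean_space set \<Rightarrow> real \<Rightarrow> ('a \<Rightarrow> real) \<Rightarrow> ennreal" where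
  "Lq_norm \<Omega> q f =
     (if integrable (lebesgue_on \<Omega>) (\<lambda>x. \<bar>f x\<bar> powr q)
      then ennreal ((\<integral>x. \<bar>f x\<bar> powr q \<partial>lebesgue_on \<Omega>) powr (1 / q))
      else \<infinity>)"

text \<open>K-functional for two (extended-valued) function norms on measurable functions on Omega;
  decompositions outside X0 or X1 have infinite cost, so the infimum runs over X0 + X1
  (and is \<infinity> if g is not in X0 + X1).\<close>
definition K_fun :: "'a::euclidean_space set \<Rightarrow> (('a \<Rightarrow> real) \<Rightarrow> ennreal) \<Rightarrow> (('a \<Rightarrow> real) \<Rightarrow> ennreal)
    \<Rightarrow> ('a \<Rightarrow> real) \<Rightarrow> real \<Rightarrow> ennreal" where
  "K_fun \<Omega> N0 N1 g t =
     (INF gs\<in>{(g0, g1). g0 \<in> borel_measurable (lebesgue_on \<Omega>) \<and> g1 \<in> borel_measurable (lebesgue_on \<Omega>)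
                     \<and> (\<forall>x\<in>\<Omega>. g x = g0 x + g1 x)}.
        N0 (fst gs) + ennreal t * N1 (snd gs))"

definition interp_norm_inf :: "real \<Rightarrow> real \<Rightarrow> (real \<Rightarrow> ennreal) \<Rightarrow> ennreal" where
  "interp_norm_inf \<theta> \<gamma> K = (SUP t\<in>{0<..<1}. ennreal (t powr (- \<theta>) * (1 - ln t) powr \<gamma>) * K t)"

end

theory Submission
  imports Defs "HOL-Probability.Distribution_Functions"
begin

text \<open>
  Both inequalities hold on any probability space. They are proved in terms of the decreasing
  rearrangement \<open>f\<^sup>*\<close> and the integrals of \<open>(f\<^sup>*)\<^sup>r\<close> over intervals, using that \<open>\<bar>f\<bar>\<close> and
  \<open>f\<^sup>*\<close> on \<open>(0,1)\<close> are equimeasurable.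

  Upper bound for \<open>K(f,t)\<close>: truncate \<open>f\<close> at the level \<open>f\<^sup>*(u)\<close> with \<open>u = t\<^bsup>pq/(q-p)\<^esup>\<close>.
  The truncated part has \<open>L\<^sup>q\<close>-norm controlled by the integral of \<open>(f\<^sup>*)\<^sup>q\<close> over \<open>[u/2, 1]\<close>.
  The remainder lives on a set of measure at most \<open>u\<close>, so \<open>x\<^sup>p \<le> L\<^bsup>p-q\<^esup>x\<^sup>q + L\<^sup>p\<close> with a
  suitable \<open>L\<close> bounds its \<open>L\<^bsup>p),\<alpha>\<^esup>\<close>-norm by \<open>2t\<close> times the \<open>L\<^bsup>q),\<alpha>\<^esup>\<close>-norm of \<open>f\<close>.

  Lower bound for the integral of \<open>(f\<^sup>*)\<^sup>q\<close> over \<open>[\<tau>, 1]\<close>: take a near-optimal decomposition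
  \<open>f = g\<^sub>0 + g\<^sub>1\<close> for \<open>K(f,t)\<close> at \<open>t = \<tau>\<^bsup>(q-p)/(pq)\<^esup>(1 - ln \<tau>)\<^bsup>-\<alpha>/p\<^esup>\<close> and use
  \<open>f\<^sup>*(s) \<le> g\<^sub>0\<^sup>*(s/2) + g\<^sub>1\<^sup>*(s/2)\<close>. The \<open>g\<^sub>1\<close>-part is bounded by its \<open>L\<^sup>q\<close>-norm. For the
  \<open>g\<^sub>0\<close>-part, the \<open>L\<^bsup>p),\<alpha>\<^esup>\<close>-bound controls both \<open>g\<^sub>0\<^sup>*(\<tau>/2)\<close> and the integral of
  \<open>(g\<^sub>0\<^sup>*)\<^sup>p\<close> over \<open>[\<tau>/2, 1]\<close>, and \<open>(g\<^sub>0\<^sup>*)\<^sup>q \<le> g\<^sub>0\<^sup>*(\<tau>/2)\<^bsup>q-p\<^esup> (g\<^sub>0\<^sup>*)\<^sup>p\<close> there.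
\<close>

lemma powr_le_split:
  fixes x L p q :: real
  assumes "0 \<le> x" "0 < L" "0 < p" "p < q"
  shows "x powr p \<le> L powr (p - q) * x powr q + L powr p"
proof (cases "x \<le> L")
  case True
  then have "x powr p \<le> L powr p"
    using assms by (intro powr_mono2) auto
  then show ?thesis
    by (simp add: add_increasing)
next
  case False
  then have "x powr p = x powr (p - q) * x powr q"
    by (simp flip: powr_add)
  also have "\<dots> \<le> L powr (p - q) * x powr q"
    using False assms by (intro mult_right_mono powr_mono2') auto
  finally show ?thesis
    by (simp add: add_increasing2)
qed

lemma powr_le_mult_powr:
  fixes x m p q :: real
  assumes "0 \<le> x" "x \<le> m" "0 \<le> p" "p \<le> q"
  shows "x powr q \<le> m powr (q - p) * x powr p"
proof (cases "x = 0")
  case False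
  then have "x powr q = x powr (q - p) * x powr p"
    by (simp flip: powr_add)
  also have "\<dots> \<le> m powr (q - p) * x powr p"
    using assms by (intro mult_right_mono powr_mono2) auto
  finally show ?thesis .
qed (use assms in simp)

lemma powr_add_le:
  fixes x y q :: real
  assumes "0 \<le> x" "0 \<le> y" "0 < q"
  shows "(x + y) powr q \<le> 2 powr q * (x powr q + y powr q)"
proof -
  have "(x + y) powr q \<le> (2 * max x y) powr q"
    using assms by (intro powr_mono2) auto
  also have "\<dots> = 2 powr q * max x y powr q"
    using assms by (simp add: powr_mult)
  also have "max x y powr q \<le> x powr q + y powr q"
    by (simp add: max_def)
  finally show ?thesis
    by (simp add: mult_left_mono)
qed

lemma root_powr_le_iff:
  fixes I c p :: real
  assumes "0 < p" "0 \<le> I" "0 \<le> c"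
  shows "I powr (1 / p) \<le> c \<longleftrightarrow> I \<le> c powr p"
proof
  assume "I powr (1 / p) \<le> c"
  then have "(I powr (1 / p)) powr p \<le> c powr p"
    using assms by (intro powr_mono2) auto
  then show "I \<le> c powr p"
    using assms by (simp add: powr_powr)
next
  assume "I \<le> c powr p"
  then have "I powr (1 / p) \<le> (c powr p) powr (1 / p)"
    using assms by (intro powr_mono2) auto
  then show "I powr (1 / p) \<le> c"
    using assms by (simp add: powr_powr)
qed

lemma weighted_root_le_iff:
  fixes I a W p \<alpha> :: real
  assumes "0 < p" "0 \<le> I" "0 \<le> a" "0 < W"
  shows "W powr (- \<alpha> / p) * I powr (1 / p) \<le> a \<longleftrightarrow> I \<le> a powr p * W powr \<alpha>"
proof -
  have "W powr (- \<alpha> / p) * I powr (1 / p) \<le> a \<longleftrightarrow> I powr (1 / p) \<le> a * W powr (\<alpha> / p)"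
    using assms by (simp add: powr_minus divide_simps mult.commute)
  also have "\<dots> \<longleftrightarrow> I \<le> a powr p * W powr \<alpha>"
    using assms by (simp add: root_powr_le_iff powr_mult powr_powr)
  finally show ?thesis .
qed

text \<open>The choice of \<open>L\<close> makes the two terms on the left equal.\<close>
lemma powr_split_balanced_le:
  fixes a W t p q \<alpha> :: real
  assumes a: "0 < a" and W: "1 \<le> W" and t: "0 < t" and p: "1 \<le> p" "p < q" and \<alpha>: "0 \<le> \<alpha>"
  defines "L \<equiv> a * W powr (\<alpha> / q) * t powr (- p / (q - p))"
  shows "L powr (p - q) * (a powr q * W powr \<alpha>) + L powr p * t powr (p * q / (q - p))
    \<le> (2 * a * t) powr p * W powr \<alpha>"
proof -
  let ?X = "a powr p * t powr p"
  have "L powr (p - q) * (a powr q * W powr \<alpha>) = ?X * W powr (\<alpha> * p / q)"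
    and "L powr p * t powr (p * q / (q - p)) = ?X * W powr (\<alpha> * p / q)"
    using a W t p unfolding L_def
    by (simp_all flip: ln_inj_iff add: ln_mult)
      (simp_all add: divide_simps, simp_all add: algebra_simps)
  then have "L powr (p - q) * (a powr q * W powr \<alpha>) + L powr p * t powr (p * q / (q - p))
      = 2 * ?X * W powr (\<alpha> * p / q)"
    by simp
  also have "\<dots> \<le> 2 powr p * ?X * W powr \<alpha>"
  proof (intro mult_mono)
    show "2 \<le> 2 powr p"
      using p powr_mono[of 1 p 2] by simp
    show "W powr (\<alpha> * p / q) \<le> W powr \<alpha>"
      using W p \<alpha> by (intro powr_mono) (auto simp: field_simps mult_left_mono)
  qed auto
  also have "\<dots> = (2 * a * t) powr p * W powr \<alpha>"
    using a t by (simp add: powr_mult)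
  finally show ?thesis .
qed

lemma one_minus_ln_powr_half_le:
  fixes t K :: real
  assumes t: "0 < t" "t < 1" and K: "1 \<le> K"
  shows "1 - ln (t powr K / 2) \<le> (K + 1) * (1 - ln t)"
proof -
  have "ln (t powr K / 2) = K * ln t - ln 2"
    using t by (simp add: ln_div)
  moreover have "ln 2 < (1::real)" "ln t < 0"
    using ln_2_less_1 t by auto
  ultimately show ?thesis
    using K by (simp add: algebra_simps)
qed

lemma one_minus_ln_quarter_le:
  fixes \<tau> :: real
  assumes "0 < \<tau>" "\<tau> < 1"
  shows "1 - ln (\<tau> / 4) \<le> 3 * (1 - ln \<tau>)"
proof -
  have "ln (\<tau> / 4) = ln \<tau> - 2 * ln 2"
    using assms ln_powr[of 2 2] by (simp add: ln_div)
  then show ?thesis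
    using ln_2_less_1 ln_less_zero[OF assms] by simp
qed

text \<open>\<open>t\<close> is the point at which the \<open>K\<close>-functional is evaluated to bound the integral of
  \<open>(f\<^sup>*)\<^sup>q\<close> over \<open>[\<tau>, 1]\<close>; the identity below is the resulting cancellation of the powers
  of \<open>\<tau>\<close> and \<open>1 - ln \<tau>\<close>.\<close>
lemma interpolation_point:
  fixes \<tau> p q \<alpha> :: real
  assumes \<tau>: "0 < \<tau>" "\<tau> < 1" and p: "0 < p" "p < q" and \<alpha>: "0 \<le> \<alpha>"
  defines "t \<equiv> \<tau> powr ((q - p) / (p * q)) * (1 - ln \<tau>) powr (- \<alpha> / p)"
  shows "0 < t" "t < 1" "1 - ln t \<le> (1 + (q - p) / (p * q) + \<alpha> / p) * (1 - ln \<tau>)"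
proof -
  define \<delta> where "\<delta> = (q - p) / (p * q)"
  define W where "W = 1 - ln \<tau>"
  have \<delta>: "0 < \<delta>"
    unfolding \<delta>_def using p by simp
  have "ln \<tau> < 0"
    using \<tau> by simp
  then have W: "1 \<le> W"
    unfolding W_def by simp
  show "0 < t"
    unfolding t_def \<delta>_def[symmetric] W_def[symmetric] using \<tau> W by simp
  have "\<tau> powr \<delta> < 1"
    using \<tau> \<delta> by (simp add: powr01_less_one)
  moreover have "W powr (- \<alpha> / p) \<le> 1"
    using W \<alpha> p powr_mono[of "- \<alpha> / p" 0 W] by simp
  then have "\<tau> powr \<delta> * W powr (- \<alpha> / p) \<le> \<tau> powr \<delta>"
    by (intro mult_left_le) auto
  ultimately show "t < 1"
    unfolding t_def \<delta>_def[symmetric] W_def[symmetric] by linarith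
  define k where "k = \<alpha> / p"
  have k: "0 \<le> k"
    unfolding k_def using \<alpha> p by simp
  have "ln t = \<delta> * ln \<tau> - k * ln W"
    unfolding t_def \<delta>_def[symmetric] W_def[symmetric] k_def using \<tau> W by (simp add: ln_mult)
  moreover have "k * ln W \<le> k * W - k"
    using W k ln_le_minus_one[of W] mult_left_mono[of "ln W" "W - 1" k] by (simp add: algebra_simps)
  moreover have "- (\<delta> * ln \<tau>) \<le> \<delta> * W"
    using \<delta> mult_left_mono[of "- ln \<tau>" W \<delta>] unfolding W_def by simp
  ultimately have "1 - ln t \<le> W + \<delta> * W + k * W"
    using W k by linarith
  then show "1 - ln t \<le> (1 + (q - p) / (p * q) + \<alpha> / p) * (1 - ln \<tau>)"
    unfolding \<delta>_def[symmetric] W_def[symmetric] k_def[symmetric] by (simp add: algebra_simps)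
qed

lemma interpolation_point_identity:
  fixes \<tau> b W w p q \<alpha> :: real
  assumes \<tau>: "0 < \<tau>" and b: "0 < b" and W: "0 < W" and w: "0 < w" and p: "0 < p" "p < q"
  defines "B \<equiv> 2 * b * (\<tau> powr ((q - p) / (p * q)) * W powr (- \<alpha> / p)) * w powr (\<alpha> / q)"
  shows "((4 / \<tau>) * (B powr p * (3 * W) powr \<alpha>)) powr ((q - p) / p) * (B powr p * (3 * W) powr \<alpha>)
    = 4 powr ((q - p) / p) * 3 powr (\<alpha> * q / p) * (2 * b) powr q * w powr \<alpha>"
  using assms unfolding B_def
  by (simp_all flip: ln_inj_iff add: ln_mult ln_div)
    (simp_all add: divide_simps, simp_all add: algebra_simps)

lemma mult_2_add_self_ennreal: "2 * x + x = 3 * (x::ennreal)"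
  by (metis distrib_right mult_1 numeral_Bit1 numeral_One one_add_one)

lemma ennreal_le_mult_if_bounds:
  fixes X Y :: ennreal and C :: real
  assumes C: "0 < C" and bound: "\<And>a. 0 < a \<Longrightarrow> Y \<le> ennreal a \<Longrightarrow> X \<le> ennreal (C * a)"
  shows "X \<le> ennreal C * Y"
proof (cases Y rule: ennreal_cases)
  case (real A)
  have "X \<le> ennreal (C * A)"
  proof (rule ennreal_le_epsilon)
    fix e :: real assume "0 < e"
    then have "0 < e / C"
      using C by simp
    then have "0 < A + e / C" "Y \<le> ennreal (A + e / C)"
      using real by (auto intro!: ennreal_leI)
    then have "X \<le> ennreal (C * (A + e / C))"
      by (rule bound)
    also have "\<dots> = ennreal (C * A) + ennreal e"
      using real C \<open>0 < e\<close> by (simp add: algebra_simps ennreal_plus)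
    finally show "X \<le> ennreal (C * A) + ennreal e" .
  qed
  then show ?thesis
    using real C by (simp add: ennreal_mult)
qed (use C in \<open>simp add: ennreal_mult_top\<close>)

lemma nn_integral_interval_const:
  "a \<le> b \<Longrightarrow> 0 \<le> c \<Longrightarrow> (\<integral>\<^sup>+s\<in>{a<..b}. ennreal c \<partial>lborel) = ennreal (c * (b - a))"
  by (simp add: nn_integral_cmult_indicator ennreal_mult)

lemma nn_integral_interval_mono:
  "(\<And>s. a < s \<Longrightarrow> s \<le> b \<Longrightarrow> F s \<le> G s) \<Longrightarrow>
    (\<integral>\<^sup>+s\<in>{a<..b}. ennreal (F s) \<partial>lborel) \<le> (\<integral>\<^sup>+s\<in>{a<..b}. ennreal (G s) \<partial>lborel)"
  by (intro nn_integral_mono) (auto simp: indicator_def ennreal_leI)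

lemma nn_integral_interval_split:
  fixes F :: "real \<Rightarrow> ennreal"
  assumes "F \<in> borel_measurable borel" and "a \<le> b" "b \<le> c"
  shows "(\<integral>\<^sup>+s\<in>{a<..c}. F s \<partial>lborel)
    = (\<integral>\<^sup>+s\<in>{a<..b}. F s \<partial>lborel) + (\<integral>\<^sup>+s\<in>{b<..c}. F s \<partial>lborel)"
proof -
  have "(\<integral>\<^sup>+s\<in>{a<..c}. F s \<partial>lborel)
      = (\<integral>\<^sup>+s. F s * indicator {a<..b} s + F s * indicator {b<..c} s \<partial>lborel)"
    using assms(2,3) by (intro nn_integral_cong) (auto simp: indicator_def)
  also have "\<dots> = (\<integral>\<^sup>+s\<in>{a<..b}. F s \<partial>lborel) + (\<integral>\<^sup>+s\<in>{b<..c}. F s \<partial>lborel)"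
    using assms(1) by (intro nn_integral_add) auto
  finally show ?thesis .
qed

lemma nn_integral_interval_half:
  fixes F :: "real \<Rightarrow> ennreal"
  assumes "F \<in> borel_measurable borel"
  shows "(\<integral>\<^sup>+s\<in>{a<..b}. F (s/2) \<partial>lborel) = 2 * (\<integral>\<^sup>+s\<in>{a/2<..b/2}. F s \<partial>lborel)"
proof -
  have "(\<integral>\<^sup>+s\<in>{a<..b}. F (s/2) \<partial>lborel)
      = ennreal \<bar>2\<bar> * (\<integral>\<^sup>+s. F ((0 + 2 * s) / 2) * indicator {a<..b} (0 + 2 * s) \<partial>lborel)"
    using assms by (intro nn_integral_real_affine) auto
  also have "\<dots> = 2 * (\<integral>\<^sup>+s\<in>{a/2<..b/2}. F s \<partial>lborel)"
    by (auto intro!: nn_integral_cong arg_cong2[where f="(*)"] simp: indicator_def)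
  finally show ?thesis .
qed

lemma nn_integral_interval_eq_LBINT:
  fixes F :: "real \<Rightarrow> real"
  assumes F: "F \<in> borel_measurable borel" and ab: "a \<le> b"
    and nonneg: "\<And>s. a \<le> s \<Longrightarrow> s \<le> b \<Longrightarrow> 0 \<le> F s"
    and bounded: "\<And>s. a \<le> s \<Longrightarrow> s \<le> b \<Longrightarrow> F s \<le> C"
  shows "(\<integral>\<^sup>+s\<in>{a<..b}. ennreal (F s) \<partial>lborel) = ennreal (LBINT s=a..b. F s)"
    and "0 \<le> (LBINT s=a..b. F s)"
proof -
  let ?G = "\<lambda>s. indicator {a..b} s * F s"
  have int: "integrable lborel ?G"
    using F bounded nonneg ab
    by (intro integrableI_bounded_set[where A="{a..b}" and B=C]) (auto simp: indicator_def)
  have LBINT: "(LBINT s=a..b. F s) = (\<integral>s. ?G s \<partial>lborel)"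
    using ab by (simp add: interval_integral_Icc set_lebesgue_integral_def)
  have "(\<integral>\<^sup>+s\<in>{a<..b}. ennreal (F s) \<partial>lborel) = (\<integral>\<^sup>+s. ennreal (?G s) \<partial>lborel)"
    using AE_lborel_singleton[of a] by (intro nn_integral_cong_AE) (auto simp: indicator_def)
  also have "\<dots> = ennreal (\<integral>s. ?G s \<partial>lborel)"
    using nonneg by (intro nn_integral_eq_integral[OF int]) (auto simp: indicator_def)
  finally show "(\<integral>\<^sup>+s\<in>{a<..b}. ennreal (F s) \<partial>lborel) = ennreal (LBINT s=a..b. F s)"
    unfolding LBINT .
  show "0 \<le> (LBINT s=a..b. F s)"
    unfolding LBINT using nonneg by (intro integral_nonneg_AE) (auto simp: indicator_def)
qed

section \<open>Distribution function and decreasing rearrangement\<close>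

definition distrib_fun :: "'b measure \<Rightarrow> ('b \<Rightarrow> real) \<Rightarrow> real \<Rightarrow> real" where
  "distrib_fun M h l = measure M {x\<in>space M. \<bar>h x\<bar> > l}"

text \<open>The rearrangement is extended by 0 to \<open>s \<le> 0\<close>, so that it is a Borel function on
  the whole real line.\<close>
definition rearr :: "'b measure \<Rightarrow> ('b \<Rightarrow> real) \<Rightarrow> real \<Rightarrow> real" where
  "rearr M h s = (if 0 < s then Inf {l. 0 \<le> l \<and> distrib_fun M h l \<le> s} else 0)"

context prob_space
begin

lemma abs_greater_sets:
  "(h::'a \<Rightarrow> real) \<in> borel_measurable M \<Longrightarrow> {x\<in>space M. \<bar>h x\<bar> > l} \<in> sets M"
  using borel_measurable_abs[of h M] by (simp add: borel_measurable_iff_greater)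

lemma distrib_fun_antimono:
  "h \<in> borel_measurable M \<Longrightarrow> l1 \<le> l2 \<Longrightarrow> distrib_fun M h l2 \<le> distrib_fun M h l1"
  unfolding distrib_fun_def by (intro finite_measure_mono) (auto intro: abs_greater_sets)

lemma distrib_fun_nonneg: "0 \<le> distrib_fun M h l"
  unfolding distrib_fun_def by simp

lemma distrib_fun_le_1: "distrib_fun M h l \<le> 1"
  unfolding distrib_fun_def by simp

lemma distrib_fun_negative: "l < 0 \<Longrightarrow> distrib_fun M h l = 1"
  unfolding distrib_fun_def by (simp add: prob_space less_le_trans)

lemma distrib_fun_right_closed:
  assumes h: "h \<in> borel_measurable M" and le: "\<And>l. l0 < l \<Longrightarrow> distrib_fun M h l \<le> s"
  shows "distrib_fun M h l0 \<le> s"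
proof -
  define A where "A n = {x\<in>space M. \<bar>h x\<bar> > l0 + 1 / Suc n}" for n :: nat
  have A: "range A \<subseteq> sets M"
    unfolding A_def using h by (auto intro: abs_greater_sets)
  have "incseq A"
  proof (rule incseq_SucI)
    fix n
    have "l0 + 1 / Suc (Suc n) \<le> l0 + 1 / Suc n"
      by (simp add: frac_le)
    then show "A n \<subseteq> A (Suc n)"
      unfolding A_def by auto
  qed
  moreover have "(\<Union>i. A i) = {x\<in>space M. \<bar>h x\<bar> > l0}"
  proof safe
    fix x i assume "x \<in> A i"
    then show "x \<in> space M" "l0 < \<bar>h x\<bar>"
      unfolding A_def by (auto intro: less_trans[rotated] simp: add.commute)
  next
    fix x assume "x \<in> space M" "l0 < \<bar>h x\<bar>"
    then obtain n :: nat where "1 / real (Suc n) < \<bar>h x\<bar> - l0"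
      by (metis diff_gt_0_iff_gt nat_approx_posE)
    with \<open>x \<in> space M\<close> show "x \<in> (\<Union>i. A i)"
      unfolding A_def by (auto simp: algebra_simps)
  qed
  ultimately have "(\<lambda>i. measure M (A i)) \<longlonglongrightarrow> distrib_fun M h l0"
    using finite_Lim_measure_incseq[OF A] unfolding distrib_fun_def by simp
  moreover have "measure M (A n) \<le> s" for n
    using le[of "l0 + 1 / Suc n"] unfolding A_def distrib_fun_def by simp
  ultimately show ?thesis
    by (meson LIMSEQ_le_const2)
qed

lemma ex_distrib_fun_le:
  assumes h: "h \<in> borel_measurable M" and s: "0 < s"
  shows "\<exists>l\<ge>0. distrib_fun M h l \<le> s"
proof -
  define A where "A n = {x\<in>space M. \<bar>h x\<bar> > real n}" for n :: nat
  have A: "range A \<subseteq> sets M"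
    unfolding A_def using h by (auto intro: abs_greater_sets)
  have "decseq A"
    unfolding A_def by (intro decseq_SucI) auto
  moreover have "(\<Inter>i. A i) = {}"
  proof (rule equals0I)
    fix x assume "x \<in> (\<Inter>i. A i)"
    moreover obtain n :: nat where "\<bar>h x\<bar> \<le> n"
      using real_arch_simple by blast
    ultimately show False
      unfolding A_def by (auto dest: spec[of _ n])
  qed
  ultimately have "(\<lambda>i. measure M (A i)) \<longlonglongrightarrow> 0"
    using finite_Lim_measure_decseq[OF A] by simp
  then obtain N where "measure M (A N) < s"
    using order_tendstoD(2)[OF _ s] by (metis eventually_sequentially order_refl)
  then show ?thesis
    unfolding A_def distrib_fun_def by (intro exI[of _ "real N"]) simp
qed

lemma rearr_nonpos: "s \<le> 0 \<Longrightarrow> rearr M h s = 0"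
  unfolding rearr_def by simp

lemma rearr_le:
  assumes "0 \<le> l" "distrib_fun M h l \<le> s"
  shows "rearr M h s \<le> l"
proof (cases "0 < s")
  case True
  have "bdd_below {l. 0 \<le> l \<and> distrib_fun M h l \<le> s}"
    by (rule bdd_belowI[of _ 0]) simp
  with True assms show ?thesis
    unfolding rearr_def by (simp add: cInf_lower)
qed (simp add: rearr_def assms)

lemma
  assumes h: "h \<in> borel_measurable M"
  shows rearr_nonneg: "0 \<le> rearr M h s"
    and distrib_fun_rearr_le: "0 < s \<Longrightarrow> distrib_fun M h (rearr M h s) \<le> s"
proof -
  let ?S = "{l. 0 \<le> l \<and> distrib_fun M h l \<le> s}"
  show "0 \<le> rearr M h s"
  proof (cases "0 < s")
    case True
    then have "?S \<noteq> {}"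
      using ex_distrib_fun_le[OF h] by auto
    with True show ?thesis
      unfolding rearr_def by (auto intro: cInf_greatest)
  qed (simp add: rearr_def)
  assume s: "0 < s"
  then have ne: "?S \<noteq> {}"
    using ex_distrib_fun_le[OF h] by auto
  show "distrib_fun M h (rearr M h s) \<le> s"
  proof (rule distrib_fun_right_closed[OF h])
    fix l assume "rearr M h s < l"
    then obtain l' where "l' \<in> ?S" "l' < l"
      using s cInf_lessD[OF ne] unfolding rearr_def by auto
    then show "distrib_fun M h l \<le> s"
      using distrib_fun_antimono[OF h, of l' l] by auto
  qed
qed

lemma less_rearr_iff:
  assumes h: "h \<in> borel_measurable M" and s: "0 < s" and l: "0 \<le> l"
  shows "l < rearr M h s \<longleftrightarrow> s < distrib_fun M h l"
proof
  assume "l < rearr M h s"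
  then show "s < distrib_fun M h l"
    using rearr_le[OF l, of h s] by linarith
next
  assume "s < distrib_fun M h l"
  show "l < rearr M h s"
  proof (rule ccontr)
    assume "\<not> l < rearr M h s"
    then have "distrib_fun M h l \<le> distrib_fun M h (rearr M h s)"
      by (intro distrib_fun_antimono[OF h]) simp
    with distrib_fun_rearr_le[OF h s] \<open>s < distrib_fun M h l\<close> show False
      by simp
  qed
qed

lemma rearr_antimono:
  "h \<in> borel_measurable M \<Longrightarrow> 0 < s1 \<Longrightarrow> s1 \<le> s2 \<Longrightarrow> rearr M h s2 \<le> rearr M h s1"
  using distrib_fun_rearr_le[of h s1] rearr_nonneg[of h s1] by (intro rearr_le) auto

lemma rearr_ge_1: "h \<in> borel_measurable M \<Longrightarrow> 1 \<le> s \<Longrightarrow> rearr M h s = 0"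
  using rearr_le[of 0 h s] rearr_nonneg[of h s] distrib_fun_le_1[of h 0] by auto

lemma rearr_mono:
  assumes "h2 \<in> borel_measurable M"
    and "\<And>l. 0 \<le> l \<Longrightarrow> distrib_fun M h1 l \<le> distrib_fun M h2 l"
  shows "rearr M h1 s \<le> rearr M h2 s"
proof (cases "0 < s")
  case True
  then have "distrib_fun M h1 (rearr M h2 s) \<le> s"
    using assms distrib_fun_rearr_le[of h2 s] rearr_nonneg[of h2 s] by (meson order_trans)
  then show ?thesis
    using assms(1) rearr_nonneg[of h2 s] by (intro rearr_le)
qed (simp add: rearr_def)

lemma rearr_add_le:
  assumes g0: "g0 \<in> borel_measurable M" and g1: "g1 \<in> borel_measurable M" and s: "0 < s"
    and le: "\<And>x. x \<in> space M \<Longrightarrow> \<bar>f x\<bar> \<le> \<bar>g0 x\<bar> + \<bar>g1 x\<bar>"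
  shows "rearr M f s \<le> rearr M g0 (s/2) + rearr M g1 (s/2)"
proof -
  let ?a = "rearr M g0 (s/2)" and ?b = "rearr M g1 (s/2)"
  let ?A = "{x\<in>space M. \<bar>g0 x\<bar> > ?a}" and ?B = "{x\<in>space M. \<bar>g1 x\<bar> > ?b}"
  have "{x\<in>space M. \<bar>f x\<bar> > ?a + ?b} \<subseteq> ?A \<union> ?B"
  proof
    fix x assume "x \<in> {x\<in>space M. \<bar>f x\<bar> > ?a + ?b}"
    then have x: "x \<in> space M" "?a + ?b < \<bar>f x\<bar>"
      by auto
    with le[of x] have "?a < \<bar>g0 x\<bar> \<or> ?b < \<bar>g1 x\<bar>"
      by linarith
    with x(1) show "x \<in> ?A \<union> ?B"
      by blast
  qed
  then have "distrib_fun M f (?a + ?b) \<le> measure M (?A \<union> ?B)"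
    unfolding distrib_fun_def by (intro finite_measure_mono) (auto intro: abs_greater_sets g0 g1)
  also have "\<dots> \<le> distrib_fun M g0 ?a + distrib_fun M g1 ?b"
    unfolding distrib_fun_def by (intro measure_Un_le) (auto intro: abs_greater_sets g0 g1)
  also have "\<dots> \<le> s"
    using distrib_fun_rearr_le[OF g0, of "s/2"] distrib_fun_rearr_le[OF g1, of "s/2"] s by simp
  finally show ?thesis
    using rearr_nonneg[OF g0] rearr_nonneg[OF g1] by (intro rearr_le) auto
qed

lemma rearr_measurable:
  assumes h: "h \<in> borel_measurable M"
  shows "rearr M h \<in> borel_measurable borel"
  unfolding borel_measurable_iff_greater
proof
  fix a :: real
  show "{s \<in> space borel. a < rearr M h s} \<in> sets borel"
  proof (cases "a < 0")
    case True
    then have "{s \<in> space borel. a < rearr M h s} = UNIV"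
      using rearr_nonneg[OF h] by (auto intro: less_le_trans)
    then show ?thesis by simp
  next
    case False
    have "a < rearr M h s \<longleftrightarrow> s \<in> {0<..<distrib_fun M h a}" for s
    proof (cases "0 < s")
      case True
      then show ?thesis
        using less_rearr_iff[OF h True, of a] False by simp
    next
      case nonpos: False
      then show ?thesis
        using rearr_nonpos[of s h] False by simp
    qed
    then have "{s \<in> space borel. a < rearr M h s} = {0<..<distrib_fun M h a}"
      by (simp add: set_eq_iff)
    then show ?thesis by simp
  qed
qed

lemma cdf_distr_abs:
  assumes h: "h \<in> borel_measurable M"
  shows "cdf (distr M borel (\<lambda>x. \<bar>h x\<bar>)) l = 1 - distrib_fun M h l"
proof -
  have "cdf (distr M borel (\<lambda>x. \<bar>h x\<bar>)) l = measure M (space M - {x\<in>space M. \<bar>h x\<bar> > l})"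
    unfolding cdf_def using h by (subst measure_distr) (auto intro!: arg_cong[where f="measure M"])
  also have "\<dots> = 1 - distrib_fun M h l"
    unfolding distrib_fun_def by (rule prob_compl) (rule abs_greater_sets[OF h])
  finally show ?thesis .
qed

end

definition unit_interval_measure :: "real measure" where
  "unit_interval_measure = restrict_space lborel {0<..<1}"

lemma prob_space_unit_interval_measure: "prob_space unit_interval_measure"
  unfolding unit_interval_measure_def by (rule prob_spaceI) (simp add: emeasure_restrict_space)

context prob_space
begin

lemma cdf_distr_rearr:
  assumes h: "h \<in> borel_measurable M"
  shows "cdf (distr unit_interval_measure borel (rearr M h)) l = 1 - distrib_fun M h l"
proof -
  have hU: "rearr M h \<in> borel_measurable unit_interval_measure"
    unfolding unit_interval_measure_def
    by (rule measurable_restrict_space1) (simp add: rearr_measurable[OF h])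
  have "cdf (distr unit_interval_measure borel (rearr M h)) l
      = measure unit_interval_measure (rearr M h -` {..l} \<inter> space unit_interval_measure)"
    unfolding cdf_def by (rule measure_distr[OF hU]) simp
  also have "\<dots> = measure lborel (rearr M h -` {..l} \<inter> {0<..<1})"
    unfolding unit_interval_measure_def by (subst measure_restrict_space) auto
  also have "\<dots> = 1 - distrib_fun M h l"
  proof (cases "l < 0")
    case True
    have "rearr M h s \<noteq> l'" if "l' \<le> l" for s l'
      using rearr_nonneg[OF h, of s] True that by linarith
    then have "rearr M h -` {..l} \<inter> {0<..<1} = {}"
      by fastforce
    then show ?thesis
      using distrib_fun_negative[OF True] by simp
  next
    case False
    let ?D = "distrib_fun M h l"
    have "rearr M h s \<le> l \<longleftrightarrow> ?D \<le> s" if "0 < s" for s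
      using less_rearr_iff[OF h that, of l] False by linarith
    then have "rearr M h -` {..l} \<inter> {0<..<1} = {0<..<1} \<inter> {?D..}"
      by (intro set_eqI) auto
    also have "\<dots> = (if ?D = 0 then {0<..<1} else {?D..<1})"
      using distrib_fun_nonneg[of h l] by (auto simp: order.order_iff_strict)
    finally show ?thesis
      using distrib_fun_le_1[of h l] distrib_fun_nonneg[of h l] by simp
  qed
  finally show ?thesis .
qed

lemma nn_integral_abs_eq_rearr:
  assumes h: "h \<in> borel_measurable M" and g: "g \<in> borel_measurable borel"
  shows "(\<integral>\<^sup>+x. g \<bar>h x\<bar> \<partial>M) = (\<integral>\<^sup>+s\<in>{0<..<1}. g (rearr M h s) \<partial>lborel)"
proof -
  have hU: "rearr M h \<in> borel_measurable unit_interval_measure"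
    unfolding unit_interval_measure_def
    by (rule measurable_restrict_space1) (simp add: rearr_measurable[OF h])
  have habs: "(\<lambda>x. \<bar>h x\<bar>) \<in> borel_measurable M"
    using h by simp
  have "(\<integral>\<^sup>+x. g \<bar>h x\<bar> \<partial>M) = (\<integral>\<^sup>+y. g y \<partial>distr M borel (\<lambda>x. \<bar>h x\<bar>))"
    by (rule nn_integral_distr[symmetric]) (auto simp: habs g)
  also have "distr M borel (\<lambda>x. \<bar>h x\<bar>) = distr unit_interval_measure borel (rearr M h)"
  proof (rule cdf_unique)
    show "real_distribution (distr M borel (\<lambda>x. \<bar>h x\<bar>))"
      using h by simp
    show "real_distribution (distr unit_interval_measure borel (rearr M h))"
      by (rule prob_space.real_distribution_distr[OF prob_space_unit_interval_measure hU])
    show "cdf (distr M borel (\<lambda>x. \<bar>h x\<bar>)) = cdf (distr unit_interval_measure borel (rearr M h))"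
      using cdf_distr_abs[OF h] cdf_distr_rearr[OF h] by auto
  qed
  also have "(\<integral>\<^sup>+y. g y \<partial>distr unit_interval_measure borel (rearr M h))
      = (\<integral>\<^sup>+s. g (rearr M h s) \<partial>unit_interval_measure)"
    by (rule nn_integral_distr) (auto simp: hU g)
  also have "\<dots> = (\<integral>\<^sup>+s\<in>{0<..<1}. g (rearr M h s) \<partial>lborel)"
    unfolding unit_interval_measure_def by (rule nn_integral_restrict_space) simp
  finally show ?thesis .
qed

end

section \<open>Grand Lebesgue norm, \<open>L\<^sup>q\<close>-norm and \<open>K\<close>-functional on a probability space\<close>

definition rearr_int :: "'b measure \<Rightarrow> ('b \<Rightarrow> real) \<Rightarrow> real \<Rightarrow> real \<Rightarrow> real \<Rightarrow> ennreal" where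
  "rearr_int M h r a b = (\<integral>\<^sup>+s\<in>{a<..b}. ennreal (rearr M h s powr r) \<partial>lborel)"

definition grand_norm_M :: "'b measure \<Rightarrow> real \<Rightarrow> real \<Rightarrow> ('b \<Rightarrow> real) \<Rightarrow> ennreal" where
  "grand_norm_M M p \<alpha> h = (SUP t\<in>{0<..<1}. ennreal ((1 - ln t) powr (- \<alpha> / p) *
      (LBINT s=t..1. rearr M h s powr p) powr (1 / p)))"

definition Lq_norm_M :: "'b measure \<Rightarrow> real \<Rightarrow> ('b \<Rightarrow> real) \<Rightarrow> ennreal" where
  "Lq_norm_M M q h = (if integrable M (\<lambda>x. \<bar>h x\<bar> powr q)
      then ennreal ((\<integral>x. \<bar>h x\<bar> powr q \<partial>M) powr (1 / q)) else \<infinity>)"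

definition K_fun_M :: "'b measure \<Rightarrow> (('b \<Rightarrow> real) \<Rightarrow> ennreal) \<Rightarrow> (('b \<Rightarrow> real) \<Rightarrow> ennreal)
    \<Rightarrow> ('b \<Rightarrow> real) \<Rightarrow> real \<Rightarrow> ennreal" where
  "K_fun_M M N0 N1 g t = (INF gs\<in>{(g0, g1). g0 \<in> borel_measurable M \<and> g1 \<in> borel_measurable M
      \<and> (\<forall>x\<in>space M. g x = g0 x + g1 x)}. N0 (fst gs) + ennreal t * N1 (snd gs))"

lemma
  assumes "\<Omega> \<in> sets lebesgue"
  shows grand_norm_eq_grand_norm_M: "grand_norm \<Omega> p \<alpha> = grand_norm_M (lebesgue_on \<Omega>) p \<alpha>"
    and Lq_norm_eq_Lq_norm_M: "Lq_norm \<Omega> q = Lq_norm_M (lebesgue_on \<Omega>) q"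
    and K_fun_eq_K_fun_M: "K_fun \<Omega> N0 N1 = K_fun_M (lebesgue_on \<Omega>) N0 N1"
proof -
  have "distr_fun \<Omega> h = distrib_fun (lebesgue_on \<Omega>) h" for h
    unfolding distr_fun_def distrib_fun_def using assms
    by (auto intro!: ext measure_restrict_space[symmetric])
  then have "drearr \<Omega> h s = rearr (lebesgue_on \<Omega>) h s" if "0 < s" for h s
    unfolding drearr_def rearr_def using that by simp
  then have "(LBINT s=t..1. drearr \<Omega> h s powr p) = (LBINT s=t..1. rearr (lebesgue_on \<Omega>) h s powr p)"
    if "0 < t" for t :: real and h
    using that by (intro interval_integral_cong) (auto simp: einterval_def min_def max_def split: if_split_asm)
  then show "grand_norm \<Omega> p \<alpha> = grand_norm_M (lebesgue_on \<Omega>) p \<alpha>"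
    unfolding grand_norm_def grand_norm_M_def by (intro ext SUP_cong) auto
  show "Lq_norm \<Omega> q = Lq_norm_M (lebesgue_on \<Omega>) q"
    unfolding Lq_norm_def Lq_norm_M_def ..
  show "K_fun \<Omega> N0 N1 = K_fun_M (lebesgue_on \<Omega>) N0 N1"
    unfolding K_fun_def K_fun_M_def using assms by (intro ext) simp
qed

lemma K_fun_M_less_imp_decomposition:
  assumes "K_fun_M M N0 N1 f t < B"
  shows "\<exists>g0 g1. g0 \<in> borel_measurable M \<and> g1 \<in> borel_measurable M
    \<and> (\<forall>x\<in>space M. f x = g0 x + g1 x) \<and> N0 g0 + ennreal t * N1 g1 < B"
  using assms unfolding K_fun_M_def INF_less_iff by auto

context prob_space
begin

lemma rearr_powr_measurable:
  "h \<in> borel_measurable M \<Longrightarrow> (\<lambda>s. rearr M h s powr r) \<in> borel_measurable borel"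
  using rearr_measurable[of h] by measurable

lemma
  assumes h: "h \<in> borel_measurable M" and t: "0 < t" "t \<le> 1" and r: "0 \<le> r"
  shows rearr_int_eq_LBINT: "rearr_int M h r t 1 = ennreal (LBINT s=t..1. rearr M h s powr r)"
    and LBINT_rearr_nonneg: "0 \<le> (LBINT s=t..1. rearr M h s powr r)"
proof -
  have "rearr M h s powr r \<le> rearr M h t powr r" if "t \<le> s" for s
    using that t r by (intro powr_mono2 rearr_antimono[OF h] rearr_nonneg[OF h])
  then show "rearr_int M h r t 1 = ennreal (LBINT s=t..1. rearr M h s powr r)"
    and "0 \<le> (LBINT s=t..1. rearr M h s powr r)"
    using nn_integral_interval_eq_LBINT[OF rearr_powr_measurable[OF h, of r] t(2),
        where C="rearr M h t powr r"] t r
    unfolding rearr_int_def one_ereal_def by auto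
qed

lemma grand_norm_M_le_iff:
  assumes h: "h \<in> borel_measurable M" and p: "0 < p" and a: "0 \<le> a"
  shows "grand_norm_M M p \<alpha> h \<le> ennreal a \<longleftrightarrow>
    (\<forall>t\<in>{0<..<1}. rearr_int M h p t 1 \<le> ennreal (a powr p * (1 - ln t) powr \<alpha>))"
proof -
  have "(1 - ln t) powr (- \<alpha> / p) * (LBINT s=t..1. rearr M h s powr p) powr (1 / p) \<le> a
      \<longleftrightarrow> rearr_int M h p t 1 \<le> ennreal (a powr p * (1 - ln t) powr \<alpha>)" if "0 < t" "t < 1" for t
  proof -
    have "ln t < 0"
      using that by simp
    then have "0 < 1 - ln t"
      by simp
    then show ?thesis
      using that p a rearr_int_eq_LBINT[OF h, of t p] LBINT_rearr_nonneg[OF h, of t p]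
        weighted_root_le_iff[of p "LBINT s=t..1. rearr M h s powr p" a "1 - ln t" \<alpha>]
      by (simp add: ennreal_le_iff)
  qed
  then show ?thesis
    unfolding grand_norm_M_def SUP_le_iff using a by (auto simp: ennreal_le_iff)
qed

lemma Lq_norm_M_le_iff:
  assumes h: "h \<in> borel_measurable M" and q: "0 < q" and B: "0 \<le> B"
  shows "Lq_norm_M M q h \<le> ennreal B \<longleftrightarrow>
    (\<integral>\<^sup>+x. ennreal (\<bar>h x\<bar> powr q) \<partial>M) \<le> ennreal (B powr q)"
proof (cases "integrable M (\<lambda>x. \<bar>h x\<bar> powr q)")
  case True
  let ?J = "\<integral>x. \<bar>h x\<bar> powr q \<partial>M"
  have int: "(\<integral>\<^sup>+x. ennreal (\<bar>h x\<bar> powr q) \<partial>M) = ennreal ?J"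
    by (rule nn_integral_eq_integral[OF True]) auto
  have norm: "Lq_norm_M M q h = ennreal (?J powr (1 / q))"
    unfolding Lq_norm_M_def using True by simp
  have "0 \<le> ?J"
    by (intro integral_nonneg_AE) auto
  then have "?J powr (1 / q) \<le> B \<longleftrightarrow> ?J \<le> B powr q"
    using root_powr_le_iff[OF q _ B] by blast
  then show ?thesis
    unfolding int norm
    using ennreal_le_iff[OF B, of "?J powr (1 / q)"] ennreal_le_iff[OF powr_ge_zero[of B q], of ?J]
    by (simp only:)
next
  case False
  have m: "(\<lambda>x. \<bar>h x\<bar> powr q) \<in> borel_measurable M"
    using h by measurable
  have "(\<integral>\<^sup>+x. ennreal (\<bar>h x\<bar> powr q) \<partial>M) = \<infinity>"
  proof (rule ccontr)
    assume "(\<integral>\<^sup>+x. ennreal (\<bar>h x\<bar> powr q) \<partial>M) \<noteq> \<infinity>"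
    then have "integrable M (\<lambda>x. \<bar>h x\<bar> powr q)"
      by (intro integrableI_nonneg[OF m]) (auto simp: less_top)
    with False show False ..
  qed
  then show ?thesis
    unfolding Lq_norm_M_def using False by (simp add: top_unique)
qed

lemma nn_integral_abs_powr_eq_rearr_int:
  assumes h: "h \<in> borel_measurable M"
  shows "(\<integral>\<^sup>+x. ennreal (\<bar>h x\<bar> powr q) \<partial>M) = rearr_int M h q 0 1"
proof -
  have "(\<integral>\<^sup>+x. ennreal (\<bar>h x\<bar> powr q) \<partial>M) = (\<integral>\<^sup>+s\<in>{0<..<1}. ennreal (rearr M h s powr q) \<partial>lborel)"
    using h by (intro nn_integral_abs_eq_rearr) auto
  also have "\<dots> = rearr_int M h q 0 1"
    unfolding rearr_int_def using rearr_ge_1[OF h]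
    by (intro nn_integral_cong) (auto simp: indicator_def)
  finally show ?thesis .
qed

end

section \<open>Upper estimate\<close>

definition clip :: "real \<Rightarrow> ('a \<Rightarrow> real) \<Rightarrow> 'a \<Rightarrow> real" where
  "clip l f x = max (- l) (min l (f x))"

lemma abs_clip: "0 \<le> l \<Longrightarrow> \<bar>clip l f x\<bar> = min \<bar>f x\<bar> l"
  unfolding clip_def by (auto simp: abs_if min_def max_def)

lemma abs_minus_clip: "0 \<le> l \<Longrightarrow> \<bar>f x - clip l f x\<bar> = max (\<bar>f x\<bar> - l) 0"
  unfolding clip_def by (auto simp: abs_if min_def max_def)

lemma clip_measurable [measurable]:
  assumes [measurable]: "f \<in> borel_measurable M"
  shows "clip l f \<in> borel_measurable M"
  unfolding clip_def by measurable

context prob_space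
begin

lemma
  assumes f: "f \<in> borel_measurable M" and l: "0 \<le> l"
  shows rearr_clip_le: "rearr M (clip l f) s \<le> rearr M f s"
    and rearr_clip_le_level: "rearr M (clip l f) s \<le> l"
    and rearr_minus_clip_le: "rearr M (\<lambda>x. f x - clip l f x) s \<le> rearr M f s"
proof -
  show "rearr M (clip l f) s \<le> rearr M f s"
    using f l by (intro rearr_mono)
      (auto simp: distrib_fun_def abs_clip intro!: finite_measure_mono abs_greater_sets)
  show "rearr M (\<lambda>x. f x - clip l f x) s \<le> rearr M f s"
    using f l by (intro rearr_mono)
      (auto simp: distrib_fun_def abs_minus_clip intro!: finite_measure_mono abs_greater_sets)
  have "distrib_fun M (clip l f) l = 0"
    unfolding distrib_fun_def using l by (simp add: abs_clip)
  then show "rearr M (clip l f) s \<le> l"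
    using l rearr_le[of l "clip l f" s] rearr_nonpos[of s "clip l f"] by force
qed

lemma rearr_minus_clip_eq_0:
  assumes f: "f \<in> borel_measurable M" and "0 < u" "u \<le> s"
  shows "rearr M (\<lambda>x. f x - clip (rearr M f u) f x) s = 0"
proof -
  let ?l = "rearr M f u"
  have "distrib_fun M (\<lambda>x. f x - clip ?l f x) 0 = distrib_fun M f ?l"
    unfolding distrib_fun_def using rearr_nonneg[OF f] by (simp add: abs_minus_clip less_max_iff_disj)
  also have "\<dots> \<le> s"
    using distrib_fun_rearr_le[OF f \<open>0 < u\<close>] \<open>u \<le> s\<close> by simp
  finally have "rearr M (\<lambda>x. f x - clip ?l f x) s \<le> 0"
    by (intro rearr_le) auto
  moreover have "0 \<le> rearr M (\<lambda>x. f x - clip ?l f x) s"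
    using f clip_measurable[OF f] by (intro rearr_nonneg borel_measurable_diff)
  ultimately show ?thesis
    by simp
qed

lemma rearr_int_clip_le:
  assumes f: "f \<in> borel_measurable M" and u: "0 < u" "u \<le> 1" and q: "0 \<le> q"
  shows "rearr_int M (clip (rearr M f u) f) q 0 1 \<le> 3 * rearr_int M f q (u/2) 1"
proof -
  let ?l = "rearr M f u" let ?g = "clip ?l f"
  have l: "0 \<le> ?l"
    using rearr_nonneg[OF f] .
  have g: "?g \<in> borel_measurable M"
    using clip_measurable[OF f] .
  have "rearr_int M ?g q 0 u \<le> (\<integral>\<^sup>+s\<in>{0<..u}. ennreal (?l powr q) \<partial>lborel)"
    unfolding rearr_int_def using f l q rearr_clip_le_level
    by (intro nn_integral_interval_mono powr_mono2) (auto intro: rearr_nonneg[OF g])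
  also have "\<dots> = 2 * (\<integral>\<^sup>+s\<in>{u/2<..u}. ennreal (?l powr q) \<partial>lborel)"
    using u by (simp add: nn_integral_interval_const flip: ennreal_numeral ennreal_mult)
  also have "(\<integral>\<^sup>+s\<in>{u/2<..u}. ennreal (?l powr q) \<partial>lborel) \<le> rearr_int M f q (u/2) u"
    unfolding rearr_int_def using f l q u
    by (intro nn_integral_interval_mono powr_mono2 rearr_antimono) auto
  also have "\<dots> \<le> rearr_int M f q (u/2) 1"
    unfolding rearr_int_def using u by (intro nn_set_integral_set_mono) auto
  finally have low: "rearr_int M ?g q 0 u \<le> 2 * rearr_int M f q (u/2) 1"
    by (simp add: mult_left_mono)
  have "rearr_int M ?g q u 1 \<le> rearr_int M f q u 1"
    unfolding rearr_int_def using f l q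
    by (intro nn_integral_interval_mono powr_mono2 rearr_clip_le) (auto intro: rearr_nonneg[OF g])
  also have "\<dots> \<le> rearr_int M f q (u/2) 1"
    unfolding rearr_int_def using u by (intro nn_set_integral_set_mono) auto
  finally have high: "rearr_int M ?g q u 1 \<le> rearr_int M f q (u/2) 1" .
  have "rearr_int M ?g q 0 1 = rearr_int M ?g q 0 u + rearr_int M ?g q u 1"
    unfolding rearr_int_def using u rearr_powr_measurable[OF g, of q]
    by (intro nn_integral_interval_split) auto
  also have "\<dots> \<le> 2 * rearr_int M f q (u/2) 1 + rearr_int M f q (u/2) 1"
    using low high by (rule add_mono)
  finally show ?thesis
    unfolding mult_2_add_self_ennreal .
qed

lemma rearr_int_minus_clip_le:
  assumes f: "f \<in> borel_measurable M" and u: "0 < u" and \<tau>: "0 \<le> \<tau>" and p: "0 < p" "p < q"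
    and L: "0 < L"
  shows "rearr_int M (\<lambda>x. f x - clip (rearr M f u) f x) p \<tau> 1
    \<le> ennreal (L powr (p - q)) * rearr_int M f q \<tau> 1 + ennreal (L powr p * u)"
proof -
  let ?g = "\<lambda>x. f x - clip (rearr M f u) f x"
  let ?F = "\<lambda>s. L powr (p - q) * rearr M f s powr q" and ?G = "\<lambda>s. L powr p * indicator {0<..u} s"
  have "rearr M ?g s powr p \<le> ?F s + ?G s" if "\<tau> < s" for s
  proof (cases "s \<le> u")
    case True
    have "rearr M ?g s powr p \<le> rearr M f s powr p"
      using p rearr_minus_clip_le[OF f rearr_nonneg[OF f]] f
      by (intro powr_mono2) (auto intro!: rearr_nonneg)
    also have "\<dots> \<le> ?F s + L powr p"
      using powr_le_split[OF rearr_nonneg[OF f] L p] .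
    finally show ?thesis
      using True that \<tau> by simp
  next
    case False
    then show ?thesis
      using rearr_minus_clip_eq_0[OF f u, of s] by simp
  qed
  then have "rearr_int M ?g p \<tau> 1 \<le> (\<integral>\<^sup>+s\<in>{\<tau><..1}. ennreal (?F s + ?G s) \<partial>lborel)"
    unfolding rearr_int_def by (intro nn_integral_interval_mono) auto
  also have "\<dots> = (\<integral>\<^sup>+s\<in>{\<tau><..1}. ennreal (?F s) + ennreal (?G s) \<partial>lborel)"
    by (intro nn_integral_cong) (simp add: ennreal_plus)
  also have "\<dots> = ennreal (L powr (p - q)) * rearr_int M f q \<tau> 1
      + (\<integral>\<^sup>+s\<in>{\<tau><..1}. ennreal (?G s) \<partial>lborel)"
    unfolding rearr_int_def using rearr_powr_measurable[OF f, of q]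
    by (subst nn_set_integral_add) (auto simp: ennreal_mult nn_integral_cmult mult.assoc)
  also have "(\<integral>\<^sup>+s\<in>{\<tau><..1}. ennreal (?G s) \<partial>lborel) \<le> (\<integral>\<^sup>+s. ennreal (L powr p) * indicator {0<..u} s \<partial>lborel)"
    by (intro nn_integral_mono) (simp add: indicator_def)
  also have "\<dots> = ennreal (L powr p * u)"
    using u by (simp add: nn_integral_cmult_indicator ennreal_mult)
  finally show ?thesis
    by (simp add: add_left_mono)
qed

lemma Lq_norm_clip_le:
  assumes f: "f \<in> borel_measurable M" and q: "0 < q" and a: "0 \<le> a"
    and Gf: "grand_norm_M M q \<alpha> f \<le> ennreal a" and u: "0 < u" "u < 1"
  shows "Lq_norm_M M q (clip (rearr M f u) f) \<le> ennreal ((3 * a powr q * (1 - ln (u/2)) powr \<alpha>) powr (1/q))"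
proof -
  let ?B = "(3 * a powr q * (1 - ln (u/2)) powr \<alpha>) powr (1/q)"
  have "(\<integral>\<^sup>+x. ennreal (\<bar>clip (rearr M f u) f x\<bar> powr q) \<partial>M) = rearr_int M (clip (rearr M f u) f) q 0 1"
    using clip_measurable[OF f] by (rule nn_integral_abs_powr_eq_rearr_int)
  also have "\<dots> \<le> 3 * rearr_int M f q (u/2) 1"
    using f u q by (intro rearr_int_clip_le) auto
  also have "rearr_int M f q (u/2) 1 \<le> ennreal (a powr q * (1 - ln (u/2)) powr \<alpha>)"
    using Gf grand_norm_M_le_iff[OF f _ a, of q \<alpha>] q u by auto
  also have "3 * ennreal (a powr q * (1 - ln (u/2)) powr \<alpha>) = ennreal (?B powr q)"
    using q by (simp add: powr_powr ennreal_mult mult.assoc)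
  finally show ?thesis
    using Lq_norm_M_le_iff[OF clip_measurable[OF f], of q ?B] q by (simp add: mult_left_mono)
qed

lemma grand_norm_minus_clip_le:
  assumes f: "f \<in> borel_measurable M" and p: "1 < p" "p < q" and \<alpha>: "0 \<le> \<alpha>" and a: "0 < a"
    and Gf: "grand_norm_M M q \<alpha> f \<le> ennreal a" and t: "0 < t" "t < 1"
  shows "grand_norm_M M p \<alpha> (\<lambda>x. f x - clip (rearr M f (t powr (p * q / (q - p)))) f x)
    \<le> ennreal (2 * a * t)"
proof -
  let ?u = "t powr (p * q / (q - p))"
  let ?g = "\<lambda>x. f x - clip (rearr M f ?u) f x"
  have g: "?g \<in> borel_measurable M"
    using f clip_measurable[OF f] by (rule borel_measurable_diff)
  have "rearr_int M ?g p \<tau> 1 \<le> ennreal ((2 * a * t) powr p * (1 - ln \<tau>) powr \<alpha>)"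
    if \<tau>: "0 < \<tau>" "\<tau> < 1" for \<tau>
  proof -
    define W where "W = 1 - ln \<tau>"
    define L where "L = a * W powr (\<alpha> / q) * t powr (- p / (q - p))"
    have W: "1 \<le> W"
      using \<tau> by (simp add: W_def)
    have L: "0 < L"
      using a t W by (simp add: L_def)
    have "rearr_int M f q \<tau> 1 \<le> ennreal (a powr q * W powr \<alpha>)"
      using Gf grand_norm_M_le_iff[OF f _ less_imp_le[OF a], of q \<alpha>] \<tau> p unfolding W_def by auto
    then have "ennreal (L powr (p - q)) * rearr_int M f q \<tau> 1 + ennreal (L powr p * ?u)
        \<le> ennreal (L powr (p - q) * (a powr q * W powr \<alpha>) + L powr p * ?u)"
      by (simp add: ennreal_mult ennreal_plus mult_left_mono)
    also have "\<dots> \<le> ennreal ((2 * a * t) powr p * W powr \<alpha>)"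
      using powr_split_balanced_le[OF a W t(1) _ p(2) \<alpha>] p unfolding L_def by (intro ennreal_leI) simp
    finally show ?thesis
      using rearr_int_minus_clip_le[OF f _ _ _ p(2) L, of ?u \<tau>] t \<tau> p unfolding W_def
      by (auto intro: order_trans)
  qed
  then show ?thesis
    using grand_norm_M_le_iff[OF g, of p "2 * a * t" \<alpha>] p a t by auto
qed

lemma K_fun_M_le_of_grand_norm_le:
  assumes f: "f \<in> borel_measurable M" and p: "1 < p" "p < q" and \<alpha>: "0 \<le> \<alpha>" and a: "0 < a"
    and Gf: "grand_norm_M M q \<alpha> f \<le> ennreal a" and t: "0 < t" "t < 1"
  defines "C \<equiv> (3 * (p * q / (q - p) + 1) powr \<alpha>) powr (1 / q)"
  shows "K_fun_M M (grand_norm_M M p \<alpha>) (Lq_norm_M M q) f t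
    \<le> ennreal (a * t * (2 + C * (1 - ln t) powr (\<alpha> / q)))"
proof -
  define K where "K = p * q / (q - p)"
  define u where "u = t powr K"
  define g1 where "g1 = clip (rearr M f u) f"
  define g0 where "g0 = (\<lambda>x. f x - g1 x)"
  define w where "w = 1 - ln t"
  have "q - p \<le> p * q"
    using p mult_strict_right_mono[of 1 p q] by linarith
  then have K: "1 \<le> K"
    unfolding K_def using p by (simp add: le_divide_eq)
  have u: "0 < u" "u < 1"
    unfolding u_def using t K powr_le_one_le[of t K] by auto
  have w: "1 \<le> w"
    unfolding w_def using t by simp
  have "ln (u/2) < 0"
    using u by simp
  have g1: "g1 \<in> borel_measurable M"
    unfolding g1_def using clip_measurable[OF f] .
  have g0: "g0 \<in> borel_measurable M"
    unfolding g0_def using f g1 by (rule borel_measurable_diff)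
  have "Lq_norm_M M q g1 \<le> ennreal ((3 * a powr q * (1 - ln (u/2)) powr \<alpha>) powr (1/q))"
    unfolding g1_def using f p a Gf u by (intro Lq_norm_clip_le) auto
  also have "(3 * a powr q * (1 - ln (u/2)) powr \<alpha>) powr (1/q) \<le> (3 * a powr q * ((K + 1) * w) powr \<alpha>) powr (1/q)"
    using one_minus_ln_powr_half_le[OF t K] \<open>ln (u/2) < 0\<close> p \<alpha> unfolding w_def u_def
    by (intro powr_mono2 mult_left_mono) auto
  also have "\<dots> = C * a * w powr (\<alpha> / q)"
    unfolding C_def K_def using a w K p by (simp add: powr_mult powr_powr)
  finally have Lq: "Lq_norm_M M q g1 \<le> ennreal (C * a * w powr (\<alpha> / q))"
    by (simp add: ennreal_leI)
  have G: "grand_norm_M M p \<alpha> g0 \<le> ennreal (2 * a * t)"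
    unfolding g0_def g1_def u_def K_def using f p \<alpha> a Gf t by (rule grand_norm_minus_clip_le)
  have "K_fun_M M (grand_norm_M M p \<alpha>) (Lq_norm_M M q) f t
      \<le> grand_norm_M M p \<alpha> g0 + ennreal t * Lq_norm_M M q g1"
    unfolding K_fun_M_def using g0 g1 by (intro INF_lower2[of "(g0, g1)"]) (auto simp: g0_def)
  also have "\<dots> \<le> ennreal (2 * a * t) + ennreal t * ennreal (C * a * w powr (\<alpha> / q))"
    using G Lq by (intro add_mono mult_left_mono) auto
  also have "\<dots> = ennreal (a * t * (2 + C * w powr (\<alpha> / q)))"
    using a t unfolding C_def by (simp add: ennreal_mult ennreal_plus algebra_simps)
  finally show ?thesis
    unfolding w_def .
qed

lemma interp_norm_K_fun_M_le:
  assumes f: "f \<in> borel_measurable M" and p: "1 < p" "p < q" and \<alpha>: "0 \<le> \<alpha>"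
  defines "C \<equiv> (3 * (p * q / (q - p) + 1) powr \<alpha>) powr (1 / q)"
  shows "interp_norm_inf 1 (- \<alpha> / q) (K_fun_M M (grand_norm_M M p \<alpha>) (Lq_norm_M M q) f)
    \<le> ennreal (2 + C) * grand_norm_M M q \<alpha> f"
proof (rule ennreal_le_mult_if_bounds)
  have C: "0 \<le> C"
    unfolding C_def by simp
  then show "0 < 2 + C"
    by simp
  fix a :: real
  assume a: "0 < a" and Gf: "grand_norm_M M q \<alpha> f \<le> ennreal a"
  show "interp_norm_inf 1 (- \<alpha> / q) (K_fun_M M (grand_norm_M M p \<alpha>) (Lq_norm_M M q) f)
      \<le> ennreal ((2 + C) * a)"
    unfolding interp_norm_inf_def
  proof (rule SUP_least)
    fix t :: real assume "t \<in> {0<..<1}"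
    then have t: "0 < t" "t < 1" by auto
    define w where "w = 1 - ln t"
    have w: "1 \<le> w"
      unfolding w_def using t by simp
    have "ennreal (t powr (- 1) * w powr (- \<alpha> / q)) * K_fun_M M (grand_norm_M M p \<alpha>) (Lq_norm_M M q) f t
        \<le> ennreal (t powr (- 1) * w powr (- \<alpha> / q)) * ennreal (a * t * (2 + C * w powr (\<alpha> / q)))"
      using K_fun_M_le_of_grand_norm_le[OF f p \<alpha> a Gf t] unfolding C_def w_def
      by (rule mult_left_mono) simp
    also have "\<dots> = ennreal (t powr (- 1) * w powr (- \<alpha> / q) * (a * t * (2 + C * w powr (\<alpha> / q))))"
      using t a C by (intro ennreal_mult[symmetric]) auto
    also have "t powr (- 1) * w powr (- \<alpha> / q) * (a * t * (2 + C * w powr (\<alpha> / q)))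
        = a * (2 * w powr (- \<alpha> / q) + C)"
      using t w by (simp add: powr_minus field_simps)
    also have "\<dots> \<le> ennreal ((2 + C) * a)"
      using w a p \<alpha> powr_mono[of "- \<alpha> / q" 0 w]
      by (intro ennreal_leI) (simp add: algebra_simps)
    finally show "ennreal (t powr (- 1) * (1 - ln t) powr (- \<alpha> / q))
        * K_fun_M M (grand_norm_M M p \<alpha>) (Lq_norm_M M q) f t \<le> ennreal ((2 + C) * a)"
      unfolding w_def .
  qed
qed

section \<open>Lower estimate\<close>

lemma K_fun_M_le_of_interp_norm_le:
  assumes I: "interp_norm_inf 1 (- \<alpha> / q) (K_fun_M M (grand_norm_M M p \<alpha>) (Lq_norm_M M q) f) \<le> ennreal b"
    and b: "0 \<le> b" and t: "0 < t" "t < 1"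
  shows "K_fun_M M (grand_norm_M M p \<alpha>) (Lq_norm_M M q) f t \<le> ennreal (b * t * (1 - ln t) powr (\<alpha> / q))"
proof -
  let ?K = "K_fun_M M (grand_norm_M M p \<alpha>) (Lq_norm_M M q) f t"
  define w where "w = 1 - ln t"
  define c where "c = t powr (- 1) * w powr (- \<alpha> / q)"
  have w: "1 \<le> w"
    unfolding w_def using t by simp
  then have c: "0 < c"
    unfolding c_def using t by simp
  have "ennreal c * ?K \<le> interp_norm_inf 1 (- \<alpha> / q) (K_fun_M M (grand_norm_M M p \<alpha>) (Lq_norm_M M q) f)"
    unfolding interp_norm_inf_def c_def w_def using t by (intro SUP_upper2[of t]) auto
  then have "ennreal (1 / c) * (ennreal c * ?K) \<le> ennreal (1 / c) * ennreal b"
    using I by (intro mult_left_mono) auto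
  moreover have "ennreal (1 / c) * ennreal c = 1"
    using c by (simp flip: ennreal_mult)
  ultimately have "?K \<le> ennreal (b / c)"
    using c b by (simp add: ennreal_mult mult.assoc[symmetric] flip: ennreal_mult)
  also have "b / c = b * t * w powr (\<alpha> / q)"
    unfolding c_def using t w by (simp add: powr_minus field_simps)
  finally show ?thesis
    unfolding w_def .
qed

lemma interp_norm_decompositionE:
  assumes b: "0 < b"
    and I: "interp_norm_inf 1 (- \<alpha> / q) (K_fun_M M (grand_norm_M M p \<alpha>) (Lq_norm_M M q) f) \<le> ennreal b"
    and t: "0 < t" "t < 1"
  obtains g0 g1 where "g0 \<in> borel_measurable M" "g1 \<in> borel_measurable M"
    "\<forall>x\<in>space M. f x = g0 x + g1 x"
    "grand_norm_M M p \<alpha> g0 \<le> ennreal (2 * b * t * (1 - ln t) powr (\<alpha> / q))"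
    "Lq_norm_M M q g1 \<le> ennreal (2 * b * (1 - ln t) powr (\<alpha> / q))"
proof -
  define B where "B = 2 * b * t * (1 - ln t) powr (\<alpha> / q)"
  have "1 - ln t \<noteq> 0"
    using t ln_less_zero[of t] by linarith
  then have "0 < B" "b * t * (1 - ln t) powr (\<alpha> / q) < B"
    unfolding B_def using b t by simp_all
  then have "ennreal (b * t * (1 - ln t) powr (\<alpha> / q)) < ennreal B"
    by (rule ennreal_lessI)
  with K_fun_M_le_of_interp_norm_le[OF I _ t] b
  have "K_fun_M M (grand_norm_M M p \<alpha>) (Lq_norm_M M q) f t < ennreal B"
    by (meson le_less_trans less_imp_le)
  then obtain g0 g1 where g: "g0 \<in> borel_measurable M" "g1 \<in> borel_measurable M"
      "\<forall>x\<in>space M. f x = g0 x + g1 x"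
      and less: "grand_norm_M M p \<alpha> g0 + ennreal t * Lq_norm_M M q g1 < ennreal B"
    using K_fun_M_less_imp_decomposition by blast
  have "grand_norm_M M p \<alpha> g0 \<le> grand_norm_M M p \<alpha> g0 + ennreal t * Lq_norm_M M q g1"
    by (rule add_increasing2) auto
  then have "grand_norm_M M p \<alpha> g0 \<le> ennreal B"
    using less by (meson le_less_trans less_imp_le)
  moreover have "ennreal t * Lq_norm_M M q g1 \<le> grand_norm_M M p \<alpha> g0 + ennreal t * Lq_norm_M M q g1"
    by (rule add_increasing) auto
  then have tL: "ennreal t * Lq_norm_M M q g1 < ennreal B"
    using less by (rule le_less_trans)
  then have "Lq_norm_M M q g1 \<le> ennreal (B / t)"
  proof (cases "Lq_norm_M M q g1" rule: ennreal_cases)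
    case (real L)
    then have "t * L < B"
      using tL t by (simp add: ennreal_mult[symmetric] ennreal_less_iff)
    then have "L \<le> B / t"
      using t by (simp add: field_simps)
    then show ?thesis
      using real by (simp add: ennreal_leI)
  qed (use tL t in \<open>simp add: ennreal_mult_top\<close>)
  moreover have "B / t = 2 * b * (1 - ln t) powr (\<alpha> / q)"
    unfolding B_def using t by simp
  ultimately show ?thesis
    using that[OF g] unfolding B_def by simp
qed

lemma rearr_int_le_of_Lq_norm_le:
  assumes g: "g \<in> borel_measurable M" and q: "0 < q" and B: "0 \<le> B"
    and L: "Lq_norm_M M q g \<le> ennreal B" and \<sigma>: "0 \<le> \<sigma>"
  shows "rearr_int M g q \<sigma> 1 \<le> ennreal (B powr q)"
proof -
  have "rearr_int M g q \<sigma> 1 \<le> rearr_int M g q 0 1"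
    unfolding rearr_int_def using \<sigma> by (intro nn_set_integral_set_mono) auto
  also have "\<dots> = (\<integral>\<^sup>+x. ennreal (\<bar>g x\<bar> powr q) \<partial>M)"
    using g by (rule nn_integral_abs_powr_eq_rearr_int[symmetric])
  also have "\<dots> \<le> ennreal (B powr q)"
    using L Lq_norm_M_le_iff[OF g q B] by simp
  finally show ?thesis .
qed

lemma rearr_powr_le_of_grand_norm_le:
  assumes g: "g \<in> borel_measurable M" and p: "0 < p" and B: "0 \<le> B"
    and G: "grand_norm_M M p \<alpha> g \<le> ennreal B" and \<sigma>: "0 < \<sigma>" "\<sigma> < 1"
  shows "rearr M g \<sigma> powr p * (\<sigma> / 2) \<le> B powr p * (1 - ln (\<sigma> / 2)) powr \<alpha>"
proof -
  let ?m = "rearr M g \<sigma>"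
  have "ennreal (?m powr p * (\<sigma> - \<sigma> / 2)) = (\<integral>\<^sup>+s\<in>{\<sigma>/2<..\<sigma>}. ennreal (?m powr p) \<partial>lborel)"
    using \<sigma> by (simp add: nn_integral_interval_const)
  also have "\<dots> \<le> rearr_int M g p (\<sigma>/2) \<sigma>"
    unfolding rearr_int_def using g p \<sigma>
    by (intro nn_integral_interval_mono powr_mono2 rearr_antimono) (auto intro: rearr_nonneg)
  also have "\<dots> \<le> rearr_int M g p (\<sigma>/2) 1"
    unfolding rearr_int_def using \<sigma> by (intro nn_set_integral_set_mono) auto
  also have "\<dots> \<le> ennreal (B powr p * (1 - ln (\<sigma> / 2)) powr \<alpha>)"
    using G grand_norm_M_le_iff[OF g p B, of \<alpha>] \<sigma> by auto
  finally show ?thesis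
    by (simp add: ennreal_le_iff)
qed

lemma rearr_int_higher_power_le:
  assumes g: "g \<in> borel_measurable M" and p: "0 < p" "p \<le> q" and B: "0 \<le> B"
    and G: "grand_norm_M M p \<alpha> g \<le> ennreal B" and \<sigma>: "0 < \<sigma>" "\<sigma> < 1"
  shows "rearr_int M g q \<sigma> 1 \<le> ennreal (rearr M g \<sigma> powr (q - p) * (B powr p * (1 - ln \<sigma>) powr \<alpha>))"
proof -
  let ?m = "rearr M g \<sigma>"
  have "rearr_int M g q \<sigma> 1 \<le> (\<integral>\<^sup>+s\<in>{\<sigma><..1}. ennreal (?m powr (q - p) * rearr M g s powr p) \<partial>lborel)"
    unfolding rearr_int_def using g p \<sigma>
    by (intro nn_integral_interval_mono powr_le_mult_powr rearr_antimono rearr_nonneg) auto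
  also have "\<dots> = ennreal (?m powr (q - p)) * rearr_int M g p \<sigma> 1"
    unfolding rearr_int_def using rearr_powr_measurable[OF g, of p]
    by (simp add: ennreal_mult nn_integral_cmult mult.assoc)
  also have "\<dots> \<le> ennreal (?m powr (q - p)) * ennreal (B powr p * (1 - ln \<sigma>) powr \<alpha>)"
    using G grand_norm_M_le_iff[OF g p(1) B, of \<alpha>] \<sigma> by (intro mult_left_mono) auto
  finally show ?thesis
    by (simp add: ennreal_mult)
qed

lemma rearr_int_le_of_grand_norm_le:
  assumes g: "g \<in> borel_measurable M" and p: "0 < p" "p \<le> q" and B: "0 \<le> B"
    and G: "grand_norm_M M p \<alpha> g \<le> ennreal B" and \<tau>: "0 < \<tau>" "\<tau> < 1" and \<alpha>: "0 \<le> \<alpha>"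
  defines "X \<equiv> B powr p * (3 * (1 - ln \<tau>)) powr \<alpha>"
  shows "rearr_int M g q (\<tau>/2) 1 \<le> ennreal (((4 / \<tau>) * X) powr ((q - p) / p) * X)"
proof -
  let ?m = "rearr M g (\<tau>/2)"
  have "ln (\<tau>/4) \<le> ln (\<tau>/2)"
    using \<tau> by simp
  then have quarter: "1 - ln (\<tau>/2) \<le> 3 * (1 - ln \<tau>)" "1 - ln (\<tau>/4) \<le> 3 * (1 - ln \<tau>)"
    using one_minus_ln_quarter_le[OF \<tau>] by auto
  have "ln (\<tau>/4) < 0" "ln (\<tau>/2) < 0"
    using \<tau> by auto
  then have Bpow: "B powr p * (1 - ln (\<tau>/4)) powr \<alpha> \<le> X" "B powr p * (1 - ln (\<tau>/2)) powr \<alpha> \<le> X"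
    unfolding X_def using quarter \<alpha> by (auto intro!: mult_left_mono powr_mono2)
  have "?m powr p * (\<tau>/4) \<le> X"
    using rearr_powr_le_of_grand_norm_le[OF g p(1) B G, of "\<tau>/2"] Bpow(1) \<tau> by simp
  then have "?m powr p \<le> (4 / \<tau>) * X"
    using \<tau> by (simp add: field_simps)
  then have "(?m powr p) powr ((q - p) / p) \<le> ((4 / \<tau>) * X) powr ((q - p) / p)"
    using p by (intro powr_mono2) auto
  then have m: "?m powr (q - p) \<le> ((4 / \<tau>) * X) powr ((q - p) / p)"
    using p by (simp add: powr_powr)
  have "rearr_int M g q (\<tau>/2) 1 \<le> ennreal (?m powr (q - p) * (B powr p * (1 - ln (\<tau>/2)) powr \<alpha>))"
    using \<tau> by (intro rearr_int_higher_power_le[OF g p B G]) auto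
  also have "\<dots> \<le> ennreal (((4 / \<tau>) * X) powr ((q - p) / p) * X)"
    using m Bpow(2) by (intro ennreal_leI mult_mono) auto
  finally show ?thesis .
qed

lemma rearr_int_le_of_abs_le_add:
  assumes f: "f \<in> borel_measurable M" and g0: "g0 \<in> borel_measurable M" and g1: "g1 \<in> borel_measurable M"
    and le: "\<And>x. x \<in> space M \<Longrightarrow> \<bar>f x\<bar> \<le> \<bar>g0 x\<bar> + \<bar>g1 x\<bar>" and q: "0 < q" and \<tau>: "0 < \<tau>"
  shows "rearr_int M f q \<tau> 1
    \<le> ennreal (2 powr (q + 1)) * (rearr_int M g0 q (\<tau>/2) 1 + rearr_int M g1 q (\<tau>/2) 1)"
proof -
  let ?F0 = "\<lambda>s. ennreal (rearr M g0 s powr q)" and ?F1 = "\<lambda>s. ennreal (rearr M g1 s powr q)"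
  have F0: "?F0 \<in> borel_measurable borel" and F1: "?F1 \<in> borel_measurable borel"
    using rearr_powr_measurable[OF g0, of q] rearr_powr_measurable[OF g1, of q] by auto
  have "rearr M f s powr q \<le> 2 powr q * (rearr M g0 (s/2) powr q + rearr M g1 (s/2) powr q)"
    if "\<tau> < s" for s
  proof -
    have "rearr M f s powr q \<le> (rearr M g0 (s/2) + rearr M g1 (s/2)) powr q"
      using rearr_add_le[OF g0 g1 _ le] that \<tau> q f by (intro powr_mono2 rearr_nonneg) auto
    also have "\<dots> \<le> 2 powr q * (rearr M g0 (s/2) powr q + rearr M g1 (s/2) powr q)"
      using g0 g1 q by (intro powr_add_le rearr_nonneg)
    finally show ?thesis .
  qed
  then have "rearr_int M f q \<tau> 1 \<le> (\<integral>\<^sup>+s\<in>{\<tau><..1}.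
      ennreal (2 powr q * (rearr M g0 (s/2) powr q + rearr M g1 (s/2) powr q)) \<partial>lborel)"
    unfolding rearr_int_def by (intro nn_integral_interval_mono) auto
  also have "\<dots> = (\<integral>\<^sup>+s\<in>{\<tau><..1}. ennreal (2 powr q) * (?F0 (s/2) + ?F1 (s/2)) \<partial>lborel)"
    by (intro nn_integral_cong) (simp add: ennreal_mult ennreal_plus)
  also have "\<dots> = ennreal (2 powr q) * ((\<integral>\<^sup>+s\<in>{\<tau><..1}. ?F0 (s/2) \<partial>lborel)
      + (\<integral>\<^sup>+s\<in>{\<tau><..1}. ?F1 (s/2) \<partial>lborel))"
    using F0 F1 by (simp add: nn_integral_cmult nn_set_integral_add mult.assoc)
  also have "\<dots> = ennreal (2 powr q) * (2 * (\<integral>\<^sup>+s\<in>{\<tau>/2<..1/2}. ?F0 s \<partial>lborel)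
      + 2 * (\<integral>\<^sup>+s\<in>{\<tau>/2<..1/2}. ?F1 s \<partial>lborel))"
    using nn_integral_interval_half[OF F0] nn_integral_interval_half[OF F1] by simp
  also have "\<dots> \<le> ennreal (2 powr q) * (2 * rearr_int M g0 q (\<tau>/2) 1 + 2 * rearr_int M g1 q (\<tau>/2) 1)"
    unfolding rearr_int_def
    by (intro mult_left_mono add_mono nn_set_integral_set_mono) auto
  also have "\<dots> = ennreal (2 powr (q + 1)) * (rearr_int M g0 q (\<tau>/2) 1 + rearr_int M g1 q (\<tau>/2) 1)"
    by (simp add: powr_add ennreal_mult distrib_left mult.assoc mult.left_commute)
  finally show ?thesis .
qed

lemma rearr_int_le_of_interp_norm_le:
  assumes f: "f \<in> borel_measurable M" and p: "1 < p" "p < q" and \<alpha>: "0 \<le> \<alpha>" and b: "0 < b"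
    and I: "interp_norm_inf 1 (- \<alpha> / q) (K_fun_M M (grand_norm_M M p \<alpha>) (Lq_norm_M M q) f) \<le> ennreal b"
    and \<tau>: "0 < \<tau>" "\<tau> < 1"
  defines "C1 \<equiv> 1 + (q - p) / (p * q) + \<alpha> / p"
    and "A \<equiv> 4 powr ((q - p) / p) * 3 powr (\<alpha> * q / p)"
  shows "rearr_int M f q \<tau> 1
    \<le> ennreal (2 powr (q + 1) * (A + 1) * C1 powr \<alpha> * (2 * b) powr q * (1 - ln \<tau>) powr \<alpha>)"
proof -
  define W where "W = 1 - ln \<tau>"
  define t where "t = \<tau> powr ((q - p) / (p * q)) * W powr (- \<alpha> / p)"
  define w where "w = 1 - ln t"
  define B where "B = 2 * b * t * w powr (\<alpha> / q)"
  have q: "0 < q"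
    using p by simp
  have W: "1 \<le> W"
    unfolding W_def using \<tau> by simp
  have t: "0 < t" "t < 1" and wW: "w \<le> C1 * W"
    using interpolation_point[OF \<tau> _ p(2) \<alpha>] p unfolding t_def w_def W_def C1_def by auto
  have w: "1 \<le> w"
    unfolding w_def using t by simp
  obtain g0 g1 where g0: "g0 \<in> borel_measurable M" and g1: "g1 \<in> borel_measurable M"
    and dec: "\<forall>x\<in>space M. f x = g0 x + g1 x"
    and G0: "grand_norm_M M p \<alpha> g0 \<le> ennreal B"
    and L1: "Lq_norm_M M q g1 \<le> ennreal (2 * b * w powr (\<alpha> / q))"
    unfolding B_def w_def by (rule interp_norm_decompositionE[OF b I t])
  have "rearr_int M g0 q (\<tau>/2) 1
      \<le> ennreal (((4 / \<tau>) * (B powr p * (3 * W) powr \<alpha>)) powr ((q - p) / p) * (B powr p * (3 * W) powr \<alpha>))"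
    unfolding W_def using g0 p b t w G0 \<tau> \<alpha> unfolding B_def
    by (intro rearr_int_le_of_grand_norm_le) auto
  also have "\<dots> = ennreal (A * (2 * b) powr q * w powr \<alpha>)"
    using interpolation_point_identity[OF \<tau>(1) b _ _ _ p(2), of W w \<alpha>] W w p
    unfolding A_def B_def t_def by (simp add: mult.assoc)
  finally have X0: "rearr_int M g0 q (\<tau>/2) 1 \<le> ennreal (A * (2 * b) powr q * w powr \<alpha>)" .
  have "rearr_int M g1 q (\<tau>/2) 1 \<le> ennreal ((2 * b * w powr (\<alpha> / q)) powr q)"
    using \<tau> b by (intro rearr_int_le_of_Lq_norm_le[OF g1 q _ L1]) auto
  also have "(2 * b * w powr (\<alpha> / q)) powr q = (2 * b) powr q * w powr \<alpha>"
    using b w q by (simp add: powr_mult powr_powr)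
  finally have X1: "rearr_int M g1 q (\<tau>/2) 1 \<le> ennreal ((2 * b) powr q * w powr \<alpha>)" .
  have "rearr_int M f q \<tau> 1
      \<le> ennreal (2 powr (q + 1)) * (rearr_int M g0 q (\<tau>/2) 1 + rearr_int M g1 q (\<tau>/2) 1)"
    using dec q \<tau> by (intro rearr_int_le_of_abs_le_add[OF f g0 g1]) auto
  also have "\<dots> \<le> ennreal (2 powr (q + 1)) * (ennreal (A * (2 * b) powr q * w powr \<alpha>)
      + ennreal ((2 * b) powr q * w powr \<alpha>))"
    using X0 X1 by (intro mult_left_mono add_mono) auto
  also have "\<dots> = ennreal (2 powr (q + 1) * (A + 1) * (2 * b) powr q * w powr \<alpha>)"
    unfolding A_def by (simp add: ennreal_mult ennreal_plus algebra_simps flip: ennreal_mult)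
  also have "\<dots> \<le> ennreal (2 powr (q + 1) * (A + 1) * (2 * b) powr q * (C1 * W) powr \<alpha>)"
    using wW w \<alpha> unfolding A_def by (intro ennreal_leI mult_left_mono powr_mono2) auto
  finally show ?thesis
    using W p \<alpha> unfolding W_def C1_def by (simp add: powr_mult mult_ac)
qed

lemma grand_norm_M_le_interp_norm:
  assumes f: "f \<in> borel_measurable M" and p: "1 < p" "p < q" and \<alpha>: "0 \<le> \<alpha>"
  defines "C \<equiv> 2 * (2 powr (q + 1) * (4 powr ((q - p) / p) * 3 powr (\<alpha> * q / p) + 1)
      * (1 + (q - p) / (p * q) + \<alpha> / p) powr \<alpha>) powr (1 / q)"
  shows "grand_norm_M M q \<alpha> f
    \<le> ennreal C * interp_norm_inf 1 (- \<alpha> / q) (K_fun_M M (grand_norm_M M p \<alpha>) (Lq_norm_M M q) f)"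
proof (rule ennreal_le_mult_if_bounds)
  have q: "0 < q"
    using p by simp
  have C1: "0 < 1 + (q - p) / (p * q) + \<alpha> / p"
    using p \<alpha> by (simp add: add_pos_nonneg)
  have "0 < 4 powr ((q - p) / p) * 3 powr (\<alpha> * q / p) + (1::real)"
    by (simp add: add_nonneg_pos)
  with C1 show C: "0 < C"
    unfolding C_def by simp
  fix b :: real
  assume b: "0 < b"
    and I: "interp_norm_inf 1 (- \<alpha> / q) (K_fun_M M (grand_norm_M M p \<alpha>) (Lq_norm_M M q) f) \<le> ennreal b"
  have "rearr_int M f q \<tau> 1 \<le> ennreal ((C * b) powr q * (1 - ln \<tau>) powr \<alpha>)"
    if "0 < \<tau>" "\<tau> < 1" for \<tau>
    using rearr_int_le_of_interp_norm_le[OF f p \<alpha> b I that] q b C1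
    unfolding C_def by (simp add: powr_mult powr_powr mult_ac)
  then show "grand_norm_M M q \<alpha> f \<le> ennreal (C * b)"
    using grand_norm_M_le_iff[OF f q, of "C * b" \<alpha>] C b by auto
qed

theorem grand_norm_M_equiv_interp_norm:
  assumes p: "1 < p" "p < q" and \<alpha>: "0 \<le> \<alpha>"
  shows "\<exists>c::real. 1 \<le> c \<and>
    (\<forall>f \<in> borel_measurable M.
       ennreal (1 / c) * grand_norm_M M q \<alpha> f
         \<le> interp_norm_inf 1 (- \<alpha> / q) (K_fun_M M (grand_norm_M M p \<alpha>) (Lq_norm_M M q) f)
     \<and> interp_norm_inf 1 (- \<alpha> / q) (K_fun_M M (grand_norm_M M p \<alpha>) (Lq_norm_M M q) f)
         \<le> ennreal c * grand_norm_M M q \<alpha> f)"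
proof -
  define Cu where "Cu = 2 + (3 * (p * q / (q - p) + 1) powr \<alpha>) powr (1 / q)"
  define Cl where "Cl = 2 * (2 powr (q + 1) * (4 powr ((q - p) / p) * 3 powr (\<alpha> * q / p) + 1)
      * (1 + (q - p) / (p * q) + \<alpha> / p) powr \<alpha>) powr (1 / q)"
  define c where "c = max 1 (max Cu Cl)"
  have c: "1 \<le> c" "Cu \<le> c" "Cl \<le> c" "0 \<le> Cl"
    unfolding c_def Cl_def by auto
  show ?thesis
  proof (intro exI[of _ c] conjI c(1) ballI)
    fix f :: "'a \<Rightarrow> real" assume f: "f \<in> borel_measurable M"
    let ?I = "interp_norm_inf 1 (- \<alpha> / q) (K_fun_M M (grand_norm_M M p \<alpha>) (Lq_norm_M M q) f)"
    have "?I \<le> ennreal Cu * grand_norm_M M q \<alpha> f"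
      unfolding Cu_def using f p \<alpha> by (intro interp_norm_K_fun_M_le) auto
    also have "\<dots> \<le> ennreal c * grand_norm_M M q \<alpha> f"
      using c by (intro mult_right_mono ennreal_leI) auto
    finally show "?I \<le> ennreal c * grand_norm_M M q \<alpha> f" .
    have "ennreal (1 / c) * grand_norm_M M q \<alpha> f \<le> ennreal (1 / c) * (ennreal Cl * ?I)"
      unfolding Cl_def using f p \<alpha> by (intro mult_left_mono grand_norm_M_le_interp_norm) auto
    also have "\<dots> = ennreal (Cl / c) * ?I"
      using c by (simp add: ennreal_mult[symmetric] mult.assoc[symmetric])
    also have "\<dots> \<le> ?I"
      using c mult_right_mono[of "ennreal (Cl / c)" 1 ?I] by (simp add: ennreal_leI)
    finally show "ennreal (1 / c) * grand_norm_M M q \<alpha> f \<le> ?I" .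
  qed
qed

end

theorem theorem1p1:
  fixes \<Omega> :: "'a::euclidean_space set" and p q \<alpha> :: real
  assumes "bounded \<Omega>" and "open \<Omega>" and "measure lebesgue \<Omega> = 1"
    and "1 < p" and "p < q" and "0 < \<alpha>"
  shows "\<exists>c::real. 1 \<le> c \<and>
    (\<forall>f \<in> borel_measurable (lebesgue_on \<Omega>).
       ennreal (1 / c) * grand_norm \<Omega> q \<alpha> f
         \<le> interp_norm_inf 1 (- \<alpha> / q) (K_fun \<Omega> (grand_norm \<Omega> p \<alpha>) (Lq_norm \<Omega> q) f)
     \<and> interp_norm_inf 1 (- \<alpha> / q) (K_fun \<Omega> (grand_norm \<Omega> p \<alpha>) (Lq_norm \<Omega> q) f)
         \<le> ennreal c * grand_norm \<Omega> q \<alpha> f)"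
proof -
  have \<Omega>: "\<Omega> \<in> sets lebesgue"
    using \<open>open \<Omega>\<close> by auto
  have "emeasure lebesgue \<Omega> = 1"
    using bounded_set_imp_lmeasurable[OF \<open>bounded \<Omega>\<close> \<Omega>] \<open>measure lebesgue \<Omega> = 1\<close>
    by (simp add: emeasure_eq_measure2)
  then have "prob_space (lebesgue_on \<Omega>)"
    using \<Omega> by (intro prob_spaceI) (simp add: emeasure_restrict_space)
  then show ?thesis
    unfolding grand_norm_eq_grand_norm_M[OF \<Omega>] Lq_norm_eq_Lq_norm_M[OF \<Omega>] K_fun_eq_K_fun_M[OF \<Omega>]
    using prob_space.grand_norm_M_equiv_interp_norm assms(4,5) less_imp_le[OF assms(6)] by blast
qed

end
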